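(* Let $k\ge 2$. If $G$ is a finite simple graph admitting a closed neighborhood balanced $k$-coloring and $H$ is a finite simple graph admitting a neighborhood-balanced $k$-coloring, then the Cartesian product $G\,\square\,H$ admits a closed neighborhood balanced $k$-coloring.
   Context: For a vertex $v$, $N(v)=\{u: uv\in E\}$ and $N[v]=N(v)\cup\{v\}$. A neighborhood-balanced $k$-coloring of a graph is a map $c:V\to\{1,\dots,k\}$ such that for every vertex $v$ the numbers $|\{u\in N(v): c(u)=i\}|$, $i=1,\dots,k$, are all equal; a closed neighborhood balanced $k$-coloring is defined likewise with $N[v]$ in place of $N(v)$. The Cartesian product $G\,\square\,H$ has vertex set $V(G)\times V(H)$, with $(g,h)$ adjacent to $(g',h')$ iff ($g=g'$ and $hh'\in E(H)$) or ($h=h'$ and $gg'\in E(G)$). *)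

theory Defs
  imports Main
begin

definition simple_graph :: "'a set \<Rightarrow> ('a \<Rightarrow> 'a \<Rightarrow> bool) \<Rightarrow> bool" where
  "simple_graph V E \<longleftrightarrow> finite V \<and> (\<forall>u v. E u v \<longrightarrow> u \<in> V \<and> v \<in> V)
     \<and> (\<forall>u v. E u v \<longrightarrow> E v u) \<and> (\<forall>v. \<not> E v v)"

definition nbhd :: "'a set \<Rightarrow> ('a \<Rightarrow> 'a \<Rightarrow> bool) \<Rightarrow> 'a \<Rightarrow> 'a set" where
  "nbhd V E v = {u \<in> V. E u v}"

definition closed_nbhd :: "'a set \<Rightarrow> ('a \<Rightarrow> 'a \<Rightarrow> bool) \<Rightarrow> 'a \<Rightarrow> 'a set" where
  "closed_nbhd V E v = insert v (nbhd V E v)"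

definition nb_coloring :: "'a set \<Rightarrow> ('a \<Rightarrow> 'a \<Rightarrow> bool) \<Rightarrow> nat \<Rightarrow> ('a \<Rightarrow> nat) \<Rightarrow> bool" where
  "nb_coloring V E k c \<longleftrightarrow> (\<forall>v\<in>V. c v \<in> {1..k}) \<and>
     (\<forall>v\<in>V. \<forall>i\<in>{1..k}. \<forall>j\<in>{1..k}.
        card {u \<in> nbhd V E v. c u = i} = card {u \<in> nbhd V E v. c u = j})"

definition cnb_coloring :: "'a set \<Rightarrow> ('a \<Rightarrow> 'a \<Rightarrow> bool) \<Rightarrow> nat \<Rightarrow> ('a \<Rightarrow> nat) \<Rightarrow> bool" where
  "cnb_coloring V E k c \<longleftrightarrow> (\<forall>v\<in>V. c v \<in> {1..k}) \<and>
     (\<forall>v\<in>V. \<forall>i\<in>{1..k}. \<forall>j\<in>{1..k}.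
        card {u \<in> closed_nbhd V E v. c u = i} = card {u \<in> closed_nbhd V E v. c u = j})"

definition cart_prod_edges ::
  "'a set \<Rightarrow> ('a \<Rightarrow> 'a \<Rightarrow> bool) \<Rightarrow> 'b set \<Rightarrow> ('b \<Rightarrow> 'b \<Rightarrow> bool) \<Rightarrow> 'a \<times> 'b \<Rightarrow> 'a \<times> 'b \<Rightarrow> bool" where
  "cart_prod_edges VG EG VH EH x y \<longleftrightarrow>
     x \<in> VG \<times> VH \<and> y \<in> VG \<times> VH \<and>
     ((fst x = fst y \<and> EH (snd x) (snd y)) \<or> (snd x = snd y \<and> EG (fst x) (fst y)))"

end

theory Submission
  imports Defs "HOL-Number_Theory.Cong"
begin

text \<open>Colour the vertex (g, h) of the product by cG g + cH h, reduced cyclically into {1..k}.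
  The closed neighbourhood of (g, h) is the disjoint union of N[g] \<times> {h} and {g} \<times> N(h).
  On the first part the colouring is cG followed by a cyclic shift of the colours, on the
  second it is cH followed by a cyclic shift; a permutation of the colours preserves
  balance, and a disjoint union of balanced sets is balanced.\<close>

definition balanced_on :: "'a set \<Rightarrow> nat \<Rightarrow> ('a \<Rightarrow> nat) \<Rightarrow> bool" where
  "balanced_on S k c \<longleftrightarrow>
     (\<forall>i\<in>{1..k}. \<forall>j\<in>{1..k}. card {x \<in> S. c x = i} = card {x \<in> S. c x = j})"

lemma cnb_coloring_iff_balanced_on:
  "cnb_coloring V E k c \<longleftrightarrow>
     (\<forall>v\<in>V. c v \<in> {1..k}) \<and> (\<forall>v\<in>V. balanced_on (closed_nbhd V E v) k c)"
  by (simp add: cnb_coloring_def balanced_on_def)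

lemma nb_coloring_iff_balanced_on:
  "nb_coloring V E k c \<longleftrightarrow>
     (\<forall>v\<in>V. c v \<in> {1..k}) \<and> (\<forall>v\<in>V. balanced_on (nbhd V E v) k c)"
  by (simp add: nb_coloring_def balanced_on_def)

lemma balanced_on_permute_colors:
  assumes \<sigma>: "bij_betw \<sigma> {1..k} {1..k}"
    and colors: "\<forall>x\<in>S. c x \<in> {1..k}"
    and bal: "balanced_on S k c"
  shows "balanced_on S k (\<sigma> \<circ> c)"
proof -
  have preimage: "\<exists>i'\<in>{1..k}. {x \<in> S. (\<sigma> \<circ> c) x = i} = {x \<in> S. c x = i'}"
    if "i \<in> {1..k}" for i
  proof -
    have "i \<in> \<sigma> ` {1..k}"
      using bij_betw_imp_surj_on[OF \<sigma>] \<open>i \<in> {1..k}\<close> by simp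
    then obtain i' where i': "i' \<in> {1..k}" "\<sigma> i' = i" by blast
    have "\<sigma> (c x) = \<sigma> i' \<longleftrightarrow> c x = i'" if "x \<in> S" for x
      using colors that i'(1) by (intro inj_on_eq_iff[OF bij_betw_imp_inj_on[OF \<sigma>]]) auto
    then have "{x \<in> S. (\<sigma> \<circ> c) x = i} = {x \<in> S. c x = i'}"
      using i'(2) by auto
    with i' show ?thesis by blast
  qed
  show ?thesis
    unfolding balanced_on_def
  proof (intro ballI)
    fix i j assume "i \<in> {1..k}" "j \<in> {1..k}"
    then obtain i' j' where i': "i' \<in> {1..k}" and j': "j' \<in> {1..k}"
      and "{x \<in> S. (\<sigma> \<circ> c) x = i} = {x \<in> S. c x = i'}"
      and "{x \<in> S. (\<sigma> \<circ> c) x = j} = {x \<in> S. c x = j'}"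
      using preimage by meson
    moreover have "card {x \<in> S. c x = i'} = card {x \<in> S. c x = j'}"
      using bal i' j' unfolding balanced_on_def by blast
    ultimately show "card {x \<in> S. (\<sigma> \<circ> c) x = i} = card {x \<in> S. (\<sigma> \<circ> c) x = j}"
      by simp
  qed
qed

lemma balanced_on_image_iff:
  assumes "inj_on f S"
  shows "balanced_on (f ` S) k c \<longleftrightarrow> balanced_on S k (c \<circ> f)"
proof -
  have "card {y \<in> f ` S. c y = i} = card {x \<in> S. (c \<circ> f) x = i}" for i
  proof -
    have "{y \<in> f ` S. c y = i} = f ` {x \<in> S. (c \<circ> f) x = i}" by auto
    moreover have "inj_on f {x \<in> S. (c \<circ> f) x = i}"
      using assms by (rule inj_on_subset) auto
    ultimately show ?thesis by (simp add: card_image)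
  qed
  then show ?thesis by (simp add: balanced_on_def)
qed

lemma balanced_on_Un:
  assumes "finite S" "finite T" "S \<inter> T = {}"
    and balS: "balanced_on S k c" and balT: "balanced_on T k c"
  shows "balanced_on (S \<union> T) k c"
proof -
  have count: "card {x \<in> S \<union> T. c x = i} = card {x \<in> S. c x = i} + card {x \<in> T. c x = i}" for i
  proof -
    have "{x \<in> S \<union> T. c x = i} = {x \<in> S. c x = i} \<union> {x \<in> T. c x = i}" by auto
    then show ?thesis using assms(1-3) by (simp add: card_Un_disjoint disjoint_iff)
  qed
  show ?thesis
    unfolding balanced_on_def
  proof (intro ballI)
    fix i j assume ij: "i \<in> {1..k}" "j \<in> {1..k}"
    have "card {x \<in> S. c x = i} = card {x \<in> S. c x = j}"
      using balS ij unfolding balanced_on_def by blast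
    moreover have "card {x \<in> T. c x = i} = card {x \<in> T. c x = j}"
      using balT ij unfolding balanced_on_def by blast
    ultimately show "card {x \<in> S \<union> T. c x = i} = card {x \<in> S \<union> T. c x = j}"
      by (simp only: count)
  qed
qed

lemma bij_betw_cyclic_shift:
  assumes "0 < (k::nat)"
  shows "bij_betw (\<lambda>x. (x + a) mod k + 1) {1..k} {1..k}"
proof -
  let ?shift = "\<lambda>x. (x + a) mod k + 1"
  have into: "?shift ` {1..k} \<subseteq> {1..k}"
    using assms by (auto simp: Suc_le_eq)
  have "inj_on ?shift {1..k}"
  proof (rule inj_onI)
    fix x y assume x: "x \<in> {1..k}" and y: "y \<in> {1..k}" and "?shift x = ?shift y"
    then have "x mod k = y mod k"
      using cong_add_rcancel_nat unfolding cong_def by auto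
    moreover have "z mod k = (if z = k then 0 else z)" if "z \<in> {1..k}" for z
      using that by auto
    ultimately show "x = y"
      using x y by (metis atLeastAtMost_iff not_one_le_zero)
  qed
  with into show ?thesis
    by (simp add: bij_betw_def endo_inj_surj)
qed

lemma closed_nbhd_cart_prod:
  assumes "g \<in> VG" "h \<in> VH"
  shows "closed_nbhd (VG \<times> VH) (cart_prod_edges VG EG VH EH) (g, h) =
           (\<lambda>x. (x, h)) ` closed_nbhd VG EG g \<union> (\<lambda>y. (g, y)) ` nbhd VH EH h"
  using assms by (auto simp: closed_nbhd_def nbhd_def cart_prod_edges_def)

lemma cnb_coloring_cart_prod:
  assumes k: "0 < k"
    and G: "simple_graph VG EG" and H: "simple_graph VH EH"
    and cG: "cnb_coloring VG EG k cG" and cH: "nb_coloring VH EH k cH"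
  shows "cnb_coloring (VG \<times> VH) (cart_prod_edges VG EG VH EH) k
           (\<lambda>(g, h). (cG g + cH h) mod k + 1)"
    (is "cnb_coloring ?V ?E k ?c")
proof -
  have balanced: "balanced_on (closed_nbhd ?V ?E (g, h)) k ?c"
    if g: "g \<in> VG" and h: "h \<in> VH" for g h
  proof -
    have "balanced_on (closed_nbhd VG EG g) k ((\<lambda>x. (x + cH h) mod k + 1) \<circ> cG)"
    proof (rule balanced_on_permute_colors[OF bij_betw_cyclic_shift[OF k]])
      show "\<forall>x\<in>closed_nbhd VG EG g. cG x \<in> {1..k}"
        using cG g by (auto simp: cnb_coloring_def closed_nbhd_def nbhd_def)
      show "balanced_on (closed_nbhd VG EG g) k cG"
        using cG g by (simp add: cnb_coloring_iff_balanced_on)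
    qed
    then have Gpart: "balanced_on ((\<lambda>x. (x, h)) ` closed_nbhd VG EG g) k ?c"
      by (simp add: balanced_on_image_iff inj_on_def comp_def)
    have "balanced_on (nbhd VH EH h) k ((\<lambda>y. (y + cG g) mod k + 1) \<circ> cH)"
    proof (rule balanced_on_permute_colors[OF bij_betw_cyclic_shift[OF k]])
      show "\<forall>y\<in>nbhd VH EH h. cH y \<in> {1..k}"
        using cH by (auto simp: nb_coloring_def nbhd_def)
      show "balanced_on (nbhd VH EH h) k cH"
        using cH h by (simp add: nb_coloring_iff_balanced_on)
    qed
    then have Hpart: "balanced_on ((\<lambda>y. (g, y)) ` nbhd VH EH h) k ?c"
      by (simp add: balanced_on_image_iff inj_on_def comp_def add.commute)
    have "finite VG" "finite VH" "\<forall>v. \<not> EH v v"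
      using G H by (simp_all add: simple_graph_def)
    then show ?thesis
      unfolding closed_nbhd_cart_prod[OF g h]
      by (intro balanced_on_Un Gpart Hpart) (auto simp: closed_nbhd_def nbhd_def)
  qed
  show ?thesis
    unfolding cnb_coloring_iff_balanced_on
    using k balanced by (auto simp: Suc_le_eq)
qed

theorem theorem2p25:
  fixes VG :: "'a set" and EG :: "'a \<Rightarrow> 'a \<Rightarrow> bool"
    and VH :: "'b set" and EH :: "'b \<Rightarrow> 'b \<Rightarrow> bool" and k :: nat
  assumes "k \<ge> 2"
    and "simple_graph VG EG" and "simple_graph VH EH"
    and "\<exists>c. cnb_coloring VG EG k c"
    and "\<exists>c. nb_coloring VH EH k c"
  shows "\<exists>c. cnb_coloring (VG \<times> VH) (cart_prod_edges VG EG VH EH) k c"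
proof -
  obtain cG where "cnb_coloring VG EG k cG" using assms(4) by blast
  moreover obtain cH where "nb_coloring VH EH k cH" using assms(5) by blast
  moreover have "0 < k" using assms(1) by simp
  ultimately show ?thesis
    using assms(2,3) cnb_coloring_cart_prod by blast
qed

end
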